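(* Let $\mathcal{T}$ be an unweighted tree on $L$ vertices and let $f:\mathbb{N}\to\mathbb{R}$ be an arbitrary function. Then the mask matrix $\mathbf{M} = [f(\mathrm{dist}_{\mathcal{T}}(i,j))]_{i,j=1,\dots,L}$ supports matrix-vector multiplication in time $O(L\log^2 L)$. Consequently $(\mathcal{T}, f)$ is tractable.
   Context: $\mathrm{dist}_{\mathcal{T}}(i,j)$ is the number of edges on the path between $i$ and $j$. A pair $(\mathcal{T},f)$ is tractable if $\mathbf{M}\mathbf{x}$ can be computed for every $\mathbf{x}\in\mathbb{R}^L$ in $o(L^2)$ time. Values of $f$ are assumed available in $O(1)$ time each; time counts arithmetic operations. *)

theory Defs
  imports Complex_Main
begin

definition is_walk :: "nat set set \<Rightarrow> nat list \<Rightarrow> bool" where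
  "is_walk E ws \<longleftrightarrow> ws \<noteq> [] \<and> (\<forall>k. Suc k < length ws \<longrightarrow> {ws ! k, ws ! Suc k} \<in> E)"

definition is_tree :: "nat \<Rightarrow> nat set set \<Rightarrow> bool" where
  "is_tree L E \<longleftrightarrow>
     (\<forall>e\<in>E. \<exists>u v. e = {u, v} \<and> u \<noteq> v \<and> u < L \<and> v < L) \<and>
     finite E \<and> card E = L - 1 \<and>
     (\<forall>i<L. \<forall>j<L. \<exists>ws. is_walk E ws \<and> hd ws = i \<and> last ws = j)"

definition tree_dist :: "nat set set \<Rightarrow> nat \<Rightarrow> nat \<Rightarrow> nat" where
  "tree_dist E i j = (LEAST n. \<exists>ws. is_walk E ws \<and> hd ws = i \<and> last ws = j \<and> length ws = Suc n)"

text \<open>A program reads the input vector x, the values f k (each in O(1)), real constants,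
  and performs arithmetic operations on previously computed registers. Its cost is its length.
  The program may depend on the tree, but not on f or x.\<close>
datatype instr = Const real | InX nat | InF nat
  | Add nat nat | Sub nat nat | Mul nat nat | Div nat nat

definition reg :: "real list \<Rightarrow> nat \<Rightarrow> real" where
  "reg vs k = (if k < length vs then vs ! k else 0)"

fun exec_instr :: "(nat \<Rightarrow> real) \<Rightarrow> (nat \<Rightarrow> real) \<Rightarrow> real list \<Rightarrow> instr \<Rightarrow> real" where
  "exec_instr f x vs (Const c) = c"
| "exec_instr f x vs (InX i) = x i"
| "exec_instr f x vs (InF k) = f k"
| "exec_instr f x vs (Add a b) = reg vs a + reg vs b"
| "exec_instr f x vs (Sub a b) = reg vs a - reg vs b"
| "exec_instr f x vs (Mul a b) = reg vs a * reg vs b"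
| "exec_instr f x vs (Div a b) = reg vs a / reg vs b"

definition run_prog :: "instr list \<Rightarrow> (nat \<Rightarrow> real) \<Rightarrow> (nat \<Rightarrow> real) \<Rightarrow> real list" where
  "run_prog p f x = foldl (\<lambda>vs ins. vs @ [exec_instr f x vs ins]) [] p"

definition prog_val :: "instr list \<Rightarrow> (nat \<Rightarrow> real) \<Rightarrow> (nat \<Rightarrow> real) \<Rightarrow> nat \<Rightarrow> real" where
  "prog_val p f x r = reg (run_prog p f x) r"

end

theory Submission
  imports Defs "HOL-Library.Log_Nat"
begin

text \<open>
  Let c be a centroid of the vertex set S, so that every component T of S - c has at most
  half of the vertices. For i in T and j outside T the path from i to j passes through c, so
  row i of the mask matrix, restricted to S, is row i restricted to T plus
  \<sigma>_S(d(i,c)) - \<sigma>_T(d(i,c)), where \<sigma>_A(e) is the shifted sum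
  of f(e + d(c,j)) x_j over j in A. All shifts e \<le> |A| together form one cyclic
  correlation of the values of f with the histogram t \<mapsto> (sum of x_j over d(c,j) = t),
  zero-padded to a power of two N = O(|A|), and three FFTs compute it with O(|A| log |A|)
  operations. Recursing into the components, whose sizes halve, costs O(L log^2 L) in total.
  Complex arithmetic is simulated on pairs of real registers.
\<close>

section \<open>Straight-line programs\<close>

type_synonym input = "(nat \<Rightarrow> real) \<times> (nat \<Rightarrow> real)"

definition computes :: "instr list \<Rightarrow> (input \<Rightarrow> real) \<Rightarrow> bool" where
  "computes p v \<longleftrightarrow> (\<exists>r<length p. \<forall>f x. prog_val p f x r = v (f, x))"

text \<open>Registers are addressed absolutely, so the cost of computing V from U is measured
  relative to an arbitrary program that already computes U.\<close>
definition computable_from :: "(input \<Rightarrow> real) set \<Rightarrow> nat \<Rightarrow> (input \<Rightarrow> real) set \<Rightarrow> bool" where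
  "computable_from U c V \<longleftrightarrow>
     (\<forall>p. (\<forall>u\<in>U. computes p u) \<longrightarrow> (\<exists>q. length q \<le> c \<and> (\<forall>v\<in>V. computes (p @ q) v)))"

lemma run_prog_snoc:
  "run_prog (p @ [i]) f x = run_prog p f x @ [exec_instr f x (run_prog p f x) i]"
  by (simp add: run_prog_def)

lemma length_run_prog [simp]: "length (run_prog p f x) = length p"
  unfolding run_prog_def by (induction p rule: rev_induct) simp_all

lemma prog_val_append: "r < length p \<Longrightarrow> prog_val (p @ q) f x r = prog_val p f x r"
proof (induction q rule: rev_induct)
  case (snoc i q)
  then show ?case
    using run_prog_snoc[of "p @ q"] by (simp add: prog_val_def reg_def nth_append)
qed simp

lemma computes_append: "computes p v \<Longrightarrow> computes (p @ q) v"
  unfolding computes_def by (metis prog_val_append trans_less_add1 length_append)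

lemma computes_reg:
  assumes "computes p v"
  obtains r where "\<forall>f x. reg (run_prog p f x) r = v (f, x)"
  using assms unfolding computes_def prog_val_def by blast

lemma computable_from_subset: "V \<subseteq> U \<Longrightarrow> computable_from U 0 V"
  unfolding computable_from_def by (intro allI impI exI[of _ "[]"]) auto

lemma computable_from_mono:
  assumes "computable_from U c V" "U \<subseteq> U'" "c \<le> c'" "V' \<subseteq> V"
  shows "computable_from U' c' V'"
  using assms unfolding computable_from_def by (meson order_trans subsetD)

lemma computable_from_trans_Un:
  assumes UV: "computable_from U c V" and VW: "computable_from (U \<union> V) d W"
  shows "computable_from U (c + d) (V \<union> W)"
  unfolding computable_from_def
proof (intro allI impI)
  fix p assume U: "\<forall>u\<in>U. computes p u"
  obtain q where q: "length q \<le> c" "\<forall>v\<in>V. computes (p @ q) v"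
    using UV U unfolding computable_from_def by blast
  have "\<forall>u\<in>U \<union> V. computes (p @ q) u"
    using U q(2) computes_append by blast
  then obtain q' where q': "length q' \<le> d" "\<forall>w\<in>W. computes (p @ q @ q') w"
    using VW unfolding computable_from_def by fastforce
  show "\<exists>q. length q \<le> c + d \<and> (\<forall>v\<in>V \<union> W. computes (p @ q) v)"
    using q q' computes_append by (intro exI[of _ "q @ q'"]) fastforce
qed

lemma computable_from_trans:
  assumes "computable_from U c V" "computable_from V d W"
  shows "computable_from U (c + d) W"
proof -
  have "computable_from (U \<union> V) d W"
    using assms(2) by (rule computable_from_mono) auto
  with assms(1) have "computable_from U (c + d) (V \<union> W)"
    by (rule computable_from_trans_Un)
  then show ?thesis by (rule computable_from_mono) auto
qed

lemma computable_from_Un: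
  assumes "computable_from U c V" "computable_from U d W"
  shows "computable_from U (c + d) (V \<union> W)"
proof -
  have "computable_from (U \<union> V) d W"
    using assms(2) by (rule computable_from_mono) auto
  with assms(1) show ?thesis by (rule computable_from_trans_Un)
qed

lemma computable_from_UN:
  assumes "finite I" "\<And>i. i \<in> I \<Longrightarrow> computable_from U (c i) (V i)"
  shows "computable_from U (\<Sum>i\<in>I. c i) (\<Union>i\<in>I. V i)"
  using assms
proof (induction I rule: finite_induct)
  case empty
  show ?case by (simp add: computable_from_subset)
next
  case (insert i I)
  then show ?case by (simp add: computable_from_Un)
qed

lemma computable_from_UN_card:
  assumes "finite P" "\<And>T. T \<in> P \<Longrightarrow> computable_from U (k * card T) (V T)" "(\<Sum>T\<in>P. card T) \<le> s"
  shows "computable_from U (k * s) (\<Union>T\<in>P. V T)"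
proof -
  have "computable_from U (\<Sum>T\<in>P. k * card T) (\<Union>T\<in>P. V T)"
    using assms(1,2) by (rule computable_from_UN)
  then show ?thesis
    by (rule computable_from_mono) (use assms(3) in \<open>auto simp: sum_distrib_left[symmetric]\<close>)
qed

lemma computable_from_emptyE:
  assumes "computable_from {} c V"
  obtains p where "length p \<le> c" "\<forall>v\<in>V. computes p v"
proof -
  have "\<exists>q. length q \<le> c \<and> (\<forall>v\<in>V. computes ([] @ q) v)"
    using assms unfolding computable_from_def by blast
  then show ?thesis
    using that by auto
qed

lemma computable_from_instr:
  assumes "\<And>p. \<forall>u\<in>U. computes p u \<Longrightarrow>
             \<exists>i. \<forall>f x. exec_instr f x (run_prog p f x) i = v (f, x)"
  shows "computable_from U 1 {v}"
  unfolding computable_from_def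
proof (intro allI impI)
  fix p assume "\<forall>u\<in>U. computes p u"
  then obtain i where i: "\<forall>f x. exec_instr f x (run_prog p f x) i = v (f, x)"
    using assms by blast
  have "computes (p @ [i]) v"
    unfolding computes_def using i
    by (intro exI[of _ "length p"]) (simp add: prog_val_def reg_def run_prog_snoc nth_append)
  then show "\<exists>q. length q \<le> 1 \<and> (\<forall>v\<in>{v}. computes (p @ q) v)"
    by (intro exI[of _ "[i]"]) simp
qed

lemma computable_const: "computable_from {} 1 {\<lambda>_. c}"
  by (rule computable_from_instr) (metis exec_instr.simps(1))

lemma computable_vector_entry: "computable_from {} 1 {\<lambda>(f, x). x j}"
  by (rule computable_from_instr) (metis exec_instr.simps(2) case_prod_conv)

lemma computable_fun_value: "computable_from {} 1 {\<lambda>(f, x). f k}"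
  by (rule computable_from_instr) (metis exec_instr.simps(3) case_prod_conv)

lemma computable_binop:
  assumes "\<And>a b. \<exists>i. \<forall>f x vs. exec_instr f x vs i = g (reg vs a) (reg vs b)"
  shows "computable_from {u, v} 1 {\<lambda>w. g (u w) (v w)}"
proof (rule computable_from_instr)
  fix p assume "\<forall>w\<in>{u, v}. computes p w"
  then have "computes p u" "computes p v" by auto
  then obtain a b where ab: "\<forall>f x. reg (run_prog p f x) a = u (f, x)" "\<forall>f x. reg (run_prog p f x) b = v (f, x)"
    by (elim computes_reg)
  obtain i where "\<forall>f x vs. exec_instr f x vs i = g (reg vs a) (reg vs b)"
    using assms by blast
  then show "\<exists>i. \<forall>f x. exec_instr f x (run_prog p f x) i = g (u (f, x)) (v (f, x))"
    using ab by (intro exI[of _ i]) simp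
qed

lemma computable_add: "computable_from {u, v} 1 {\<lambda>w. u w + v w}"
  by (rule computable_binop) (metis exec_instr.simps(4))

lemma computable_diff: "computable_from {u, v} 1 {\<lambda>w. u w - v w}"
  by (rule computable_binop) (metis exec_instr.simps(5))

lemma computable_mult: "computable_from {u, v} 1 {\<lambda>w. u w * v w}"
  by (rule computable_binop) (metis exec_instr.simps(6))

lemma computable_add_diff: "computable_from {u, v, w} 2 {\<lambda>y. u y + v y - w y}"
proof -
  have "computable_from {u, v, w} (1 + 0) ({\<lambda>y. u y + v y} \<union> {w})"
    by (intro computable_from_Un computable_from_subset computable_from_mono[OF computable_add]) auto
  then have "computable_from {u, v, w} 1 {\<lambda>y. u y + v y, w}"
    by (rule computable_from_mono) auto
  from computable_from_trans[OF this computable_diff] show ?thesis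
    by (rule computable_from_mono) auto
qed

lemma computable_scale: "computable_from {v} 2 {\<lambda>y. c * v y}"
proof -
  have "computable_from {v} (1 + 0) ({\<lambda>_. c} \<union> {v})"
    by (intro computable_from_Un computable_from_subset computable_from_mono[OF computable_const]) auto
  then have "computable_from {v} 1 {\<lambda>_. c, v}"
    by (rule computable_from_mono) auto
  from computable_from_trans[OF this computable_mult] show ?thesis
    by (rule computable_from_mono) auto
qed

section \<open>Complex arithmetic and the fast Fourier transform\<close>

definition complex_parts :: "(input \<Rightarrow> complex) set \<Rightarrow> (input \<Rightarrow> real) set" where
  "complex_parts Z = (\<Union>z\<in>Z. {\<lambda>i. Re (z i), \<lambda>i. Im (z i)})"

lemma complex_parts_mono: "Z \<subseteq> Z' \<Longrightarrow> complex_parts Z \<subseteq> complex_parts Z'"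
  unfolding complex_parts_def by blast

lemma complex_parts_Un: "complex_parts (Z \<union> Z') = complex_parts Z \<union> complex_parts Z'"
  unfolding complex_parts_def by blast

lemma complex_parts_image: "complex_parts (f ` I) = (\<Union>i\<in>I. complex_parts {f i})"
  unfolding complex_parts_def by blast

lemma computable_complex_add:
  "computable_from (complex_parts {z, u}) 2 (complex_parts {\<lambda>i. z i + u i})"
proof -
  have "computable_from (complex_parts {z, u}) (1 + 1)
          ({\<lambda>i. Re (z i) + Re (u i)} \<union> {\<lambda>i. Im (z i) + Im (u i)})"
    by (intro computable_from_Un; rule computable_from_mono[OF computable_add])
      (auto simp: complex_parts_def)
  then show ?thesis by (rule computable_from_mono) (auto simp: complex_parts_def)
qed

lemma computable_combine_products:
  assumes "computable_from {\<lambda>i. a i * b i, \<lambda>i. c i * d i} 1 {\<lambda>i. g (a i * b i) (c i * d i)}"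
  shows "computable_from {a, b, c, d} 3 {\<lambda>i. g (a i * b i) (c i * d i)}"
proof -
  have "computable_from {a, b, c, d} (1 + 1) ({\<lambda>i. a i * b i} \<union> {\<lambda>i. c i * d i})"
    by (intro computable_from_Un; rule computable_from_mono[OF computable_mult]) auto
  then have "computable_from {a, b, c, d} 2 {\<lambda>i. a i * b i, \<lambda>i. c i * d i}"
    by (rule computable_from_mono) auto
  from computable_from_trans[OF this assms] show ?thesis
    by (rule computable_from_mono) auto
qed

lemma computable_complex_mult:
  "computable_from (complex_parts {z, u}) 6 (complex_parts {\<lambda>i. z i * u i})"
proof -
  let ?U = "{\<lambda>i. Re (z i), \<lambda>i. Re (u i), \<lambda>i. Im (z i), \<lambda>i. Im (u i)}"
  have "computable_from ?U (3 + 3)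
          ({\<lambda>i. Re (z i) * Re (u i) - Im (z i) * Im (u i)} \<union>
           {\<lambda>i. Re (z i) * Im (u i) + Im (z i) * Re (u i)})"
    by (intro computable_from_Un
        computable_combine_products[where a="\<lambda>i. Re (z i)" and b="\<lambda>i. Re (u i)"
          and c="\<lambda>i. Im (z i)" and d="\<lambda>i. Im (u i)", OF computable_diff]
        computable_from_mono[OF computable_combine_products[where a="\<lambda>i. Re (z i)"
          and b="\<lambda>i. Im (u i)" and c="\<lambda>i. Im (z i)" and d="\<lambda>i. Re (u i)", OF computable_add]])
      auto
  moreover have "complex_parts {z, u} = ?U"
    unfolding complex_parts_def by auto
  ultimately show ?thesis
    by (auto simp: complex_parts_def elim: computable_from_mono)
qed

lemma computable_complex_const: "computable_from {} 2 (complex_parts {\<lambda>_. w})"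
proof -
  have "computable_from {} (1 + 1) ({\<lambda>_. Re w} \<union> {\<lambda>_. Im w})"
    by (intro computable_from_Un computable_const)
  then show ?thesis by (rule computable_from_mono) (auto simp: complex_parts_def)
qed

lemma computable_complex_scale_add:
  "computable_from (complex_parts {z, u}) 10 (complex_parts {\<lambda>i. u i + w * z i})"
proof -
  have const: "computable_from (complex_parts {z, u}) (2 + 0)
                 (complex_parts {\<lambda>_. w} \<union> complex_parts {z, u})"
    by (intro computable_from_Un computable_from_subset
        computable_from_mono[OF computable_complex_const]) auto
  have mult: "computable_from (complex_parts {\<lambda>_. w} \<union> complex_parts {z, u}) (6 + 0)
                (complex_parts {\<lambda>i. w * z i} \<union> complex_parts {u})"
    by (intro computable_from_Un computable_from_subset
        computable_from_mono[OF computable_complex_mult[of "\<lambda>_. w" z]])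
      (unfold complex_parts_def, blast+)
  have add: "computable_from (complex_parts {\<lambda>i. w * z i} \<union> complex_parts {u}) 2
               (complex_parts {\<lambda>i. u i + w * z i})"
    by (rule computable_from_mono[OF computable_complex_add[of u "\<lambda>i. w * z i"]])
      (unfold complex_parts_def, blast+)
  from computable_from_trans[OF computable_from_trans[OF const mult] add] show ?thesis
    by (rule computable_from_mono) auto
qed

lemma computable_complex_of_real:
  "computable_from V 1 (complex_parts ((\<lambda>v i. complex_of_real (v i)) ` V))"
proof -
  have "computable_from V (0 + 1) (V \<union> {\<lambda>_. 0})"
    by (intro computable_from_Un computable_from_subset computable_from_mono[OF computable_const]) auto
  then show ?thesis
    by (rule computable_from_mono) (auto simp: complex_parts_def)
qed

definition dft :: "nat \<Rightarrow> 'a::comm_ring_1 \<Rightarrow> (nat \<Rightarrow> 'a) \<Rightarrow> nat \<Rightarrow> 'a" where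
  "dft N z a j = (\<Sum>s<N. a s * z ^ (j * s))"

lemma sum_lessThan_double:
  fixes M :: nat
  shows "(\<Sum>s<2 * M. g s) = (\<Sum>s<M. g (2 * s)) + (\<Sum>s<M. g (2 * s + 1))"
  by (induction M) (simp_all add: algebra_simps)

lemma dft_split:
  fixes z :: "'a::comm_ring_1"
  assumes "z ^ (2 * M) = 1"
  shows "dft (2 * M) z a j =
           dft M (z\<^sup>2) (\<lambda>s. a (2 * s)) (j mod M) + z ^ j * dft M (z\<^sup>2) (\<lambda>s. a (2 * s + 1)) (j mod M)"
proof -
  have even: "z ^ (j * (2 * s)) = (z\<^sup>2) ^ (j mod M * s)" for s
  proof -
    have "j * (2 * s) = (j mod M + M * (j div M)) * (2 * s)"
      by (simp only: mod_mult_div_eq)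
    also have "\<dots> = 2 * (j mod M * s) + 2 * M * (j div M * s)"
      by (simp only: ring_distribs mult_ac)
    finally show ?thesis
      using assms by (simp add: power_add power_mult)
  qed
  have odd: "z ^ (j * (2 * s + 1)) = z ^ j * (z\<^sup>2) ^ (j mod M * s)" for s
  proof -
    have "z ^ (j * (2 * s + 1)) = z ^ j * z ^ (j * (2 * s))"
      by (simp add: distrib_left power_add mult.commute)
    then show ?thesis by (simp only: even)
  qed
  show ?thesis
    unfolding dft_def sum_lessThan_double even odd by (simp add: sum_distrib_left algebra_simps)
qed

lemma computable_fft:
  assumes "z ^ 2 ^ k = 1"
  shows "computable_from (complex_parts (a ` {..<2 ^ k})) (10 * k * 2 ^ k)
           (complex_parts ((\<lambda>j i. dft (2 ^ k) z (\<lambda>s. a s i) j) ` {..<2 ^ k}))"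
  using assms
proof (induction k arbitrary: a z)
  case 0
  have "(\<lambda>j i. dft 1 z (\<lambda>s. a s i) j) ` {..<1} = a ` {..<1}"
    by (auto simp: dft_def lessThan_Suc)
  then show ?case by (simp add: computable_from_subset)
next
  case (Suc k)
  define M where "M = (2::nat) ^ k"
  have M: "M > 0" "(2::nat) ^ Suc k = 2 * M"
    by (simp_all add: M_def)
  have z2: "(z\<^sup>2) ^ 2 ^ k = 1"
    using Suc.prems by (simp add: power_mult[symmetric] mult.commute)
  define Ev where "Ev = (\<lambda>j i. dft M (z\<^sup>2) (\<lambda>s. a (2 * s) i) j)"
  define Od where "Od = (\<lambda>j i. dft M (z\<^sup>2) (\<lambda>s. a (2 * s + 1) i) j)"
  let ?U = "complex_parts (a ` {..<2 * M})"
  have "computable_from ?U (10 * k * M) (complex_parts (Ev ` {..<M}))"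
    by (rule computable_from_mono[OF Suc.IH[of "z\<^sup>2" "\<lambda>s. a (2 * s)", OF z2]])
      (auto simp: M_def Ev_def intro!: complex_parts_mono)
  moreover have "computable_from ?U (10 * k * M) (complex_parts (Od ` {..<M}))"
    by (rule computable_from_mono[OF Suc.IH[of "z\<^sup>2" "\<lambda>s. a (2 * s + 1)", OF z2]])
      (auto simp: M_def Od_def intro!: complex_parts_mono)
  ultimately have halves:
    "computable_from ?U (10 * k * M + 10 * k * M) (complex_parts (Ev ` {..<M} \<union> Od ` {..<M}))"
    unfolding complex_parts_Un by (rule computable_from_Un)
  have butterfly: "computable_from (complex_parts (Ev ` {..<M} \<union> Od ` {..<M})) 10
      (complex_parts {\<lambda>i. dft (2 * M) z (\<lambda>s. a s i) j})" for j
  proof (rule computable_from_mono[OF computable_complex_scale_add[of "Od (j mod M)" "Ev (j mod M)" "z ^ j"]])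
    show "complex_parts {Od (j mod M), Ev (j mod M)} \<subseteq> complex_parts (Ev ` {..<M} \<union> Od ` {..<M})"
      using M by (intro complex_parts_mono) auto
    have "z ^ (2 * M) = 1"
      using Suc.prems M by simp
    then show "complex_parts {\<lambda>i. dft (2 * M) z (\<lambda>s. a s i) j}
        \<subseteq> complex_parts {\<lambda>i. Ev (j mod M) i + z ^ j * Od (j mod M) i}"
      by (simp add: dft_split Ev_def Od_def)
  qed simp
  have "computable_from (complex_parts (Ev ` {..<M} \<union> Od ` {..<M})) (\<Sum>j<2 * M. 10)
      (\<Union>j<2 * M. complex_parts {\<lambda>i. dft (2 * M) z (\<lambda>s. a s i) j})"
    by (intro computable_from_UN butterfly) simp
  from computable_from_trans[OF halves this] show ?case
    unfolding M by (rule computable_from_mono) (auto simp: M_def complex_parts_def algebra_simps)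
qed

section \<open>Shifted sums by cyclic correlation\<close>

lemma sum_roots_of_unity:
  fixes d :: int
  assumes "N > 0"
  shows "(\<Sum>j<N. cis (2 * pi * d / N) ^ j) = (if int N dvd d then of_nat N else 0)"
proof -
  define u where "u = cis (2 * pi * d / N)"
  have "u ^ N = cis (2 * pi * d)"
    using assms by (simp add: u_def DeMoivre)
  then have uN: "u ^ N = 1"
    by simp
  show ?thesis
  proof (cases "int N dvd d")
    case True
    then obtain m where "d = int N * m" by blast
    then have "2 * pi * d / N = 2 * pi * real_of_int m"
      using assms by simp
    then have "u = cis (2 * pi * real_of_int m)"
      by (simp only: u_def)
    also have "\<dots> = 1"
      by (rule cis_multiple_2pi) simp
    finally show ?thesis
      using True by (simp add: u_def)
  next
    case False
    have "u \<noteq> 1"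
    proof
      assume "u = 1"
      then have "Re u = 1"
        by simp
      then have "cos (2 * pi * d / N) = 1"
        by (simp add: u_def)
      then obtain m :: int where "2 * pi * d / N = real_of_int m * 2 * pi"
        using cos_one_2pi_int by blast
      then have "real_of_int d = real_of_int (m * int N)"
        using assms by (simp add: field_simps)
      then have "d = m * int N"
        by (simp only: of_int_eq_iff)
      then show False
        using False by simp
    qed
    then show ?thesis
      using uN False by (simp add: sum_gp_strict u_def)
  qed
qed

lemma int_dvd_diff_iff_eq_mod: "s < N \<Longrightarrow> int N dvd int s - int m \<longleftrightarrow> s = m mod N"
  by (metis mod_eq_dvd_iff of_nat_mod of_nat_eq_iff mod_less)

lemma dft_correlation:
  fixes A B :: "nat \<Rightarrow> complex"
  assumes "N > 0"
  defines "w \<equiv> cis (2 * pi / N)"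
  shows "dft N (cnj w) (\<lambda>j. dft N w A j * dft N (cnj w) B j) e
           = of_nat N * (\<Sum>t<N. A ((t + e) mod N) * B t)"
proof -
  have root: "w ^ s * cnj w ^ m = cis (2 * pi * (int s - int m) / N)" for s m
    unfolding w_def by (simp add: DeMoivre cis_cnj cis_mult algebra_simps diff_divide_distrib)
  have orth: "(\<Sum>j<N. (w ^ s * cnj w ^ m) ^ j) = (if s = m mod N then of_nat N else 0)"
    if "s < N" for s m
    unfolding root sum_roots_of_unity[OF assms(1)] int_dvd_diff_iff_eq_mod[OF that] ..
  have "dft N (cnj w) (\<lambda>j. dft N w A j * dft N (cnj w) B j) e
      = (\<Sum>j<N. \<Sum>t<N. \<Sum>s<N. A s * B t * (w ^ s * cnj w ^ (t + e)) ^ j)"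
    by (simp add: dft_def sum_distrib_left sum_distrib_right power_mult_distrib power_add
        power_mult[symmetric] mult_ac)
  also have "\<dots> = (\<Sum>t<N. \<Sum>j<N. \<Sum>s<N. A s * B t * (w ^ s * cnj w ^ (t + e)) ^ j)"
    by (rule sum.swap)
  also have "\<dots> = (\<Sum>t<N. \<Sum>s<N. \<Sum>j<N. A s * B t * (w ^ s * cnj w ^ (t + e)) ^ j)"
    by (intro sum.cong refl sum.swap)
  also have "\<dots> = (\<Sum>t<N. \<Sum>s<N. A s * B t * (\<Sum>j<N. (w ^ s * cnj w ^ (t + e)) ^ j))"
    by (simp add: sum_distrib_left)
  also have "\<dots> = (\<Sum>t<N. \<Sum>s<N. if s = (t + e) mod N then of_nat N * (A s * B t) else 0)"
    by (intro sum.cong refl) (simp add: orth)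
  also have "\<dots> = of_nat N * (\<Sum>t<N. A ((t + e) mod N) * B t)"
    using assms(1) by (simp add: sum_distrib_left)
  finally show ?thesis .
qed

lemma computable_dft_products:
  fixes A B :: "nat \<Rightarrow> input \<Rightarrow> real"
  assumes N: "N = 2 ^ k" and roots: "z ^ N = 1" "z' ^ N = 1"
  shows "computable_from (A ` {..<N} \<union> B ` {..<N}) (20 * k * N + 6 * N + 1)
           (complex_parts ((\<lambda>j i. dft N z (\<lambda>s. of_real (A s i)) j * dft N z' (\<lambda>t. of_real (B t i)) j)
              ` {..<N}))"
proof -
  define cA where "cA = (\<lambda>s i. complex_of_real (A s i))"
  define cB where "cB = (\<lambda>t i. complex_of_real (B t i))"
  define FA where "FA j i = dft N z (\<lambda>s. cA s i) j" for j i
  define FB where "FB j i = dft N z' (\<lambda>t. cB t i) j" for j i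
  let ?I = "{..<N}"
  have embed: "computable_from (A ` ?I \<union> B ` ?I) 1 (complex_parts (cA ` ?I \<union> cB ` ?I))"
    using computable_complex_of_real[of "A ` ?I \<union> B ` ?I"]
    by (simp add: cA_def cB_def image_Un image_image)
  have "computable_from (complex_parts (cA ` ?I)) (10 * k * N) (complex_parts (FA ` ?I))"
    using computable_fft[of z k cA] roots unfolding N FA_def by simp
  moreover have "computable_from (complex_parts (cB ` ?I)) (10 * k * N) (complex_parts (FB ` ?I))"
    using computable_fft[of z' k cB] roots unfolding N FB_def by simp
  ultimately have dfts: "computable_from (complex_parts (cA ` ?I \<union> cB ` ?I)) (10 * k * N + 10 * k * N)
      (complex_parts (FA ` ?I \<union> FB ` ?I))"
    unfolding complex_parts_Un by (intro computable_from_Un) (auto elim: computable_from_mono)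
  have "computable_from (complex_parts (FA ` ?I \<union> FB ` ?I)) (\<Sum>j<N. 6)
      (\<Union>j<N. complex_parts {\<lambda>i. FA j i * FB j i})"
    by (intro computable_from_UN computable_from_mono[OF computable_complex_mult]
        complex_parts_mono) auto
  then have products: "computable_from (complex_parts (FA ` ?I \<union> FB ` ?I)) (6 * N)
      (complex_parts ((\<lambda>j i. FA j i * FB j i) ` ?I))"
    by (simp add: complex_parts_image mult.commute)
  from computable_from_trans[OF computable_from_trans[OF embed dfts] products] show ?thesis
    unfolding FA_def FB_def cA_def cB_def by (rule computable_from_mono) auto
qed

lemma computable_cyclic_correlation:
  fixes A B :: "nat \<Rightarrow> input \<Rightarrow> real"
  assumes N: "N = 2 ^ k" and "n \<le> N"
  shows "computable_from (A ` {..<N} \<union> B ` {..<N}) (30 * k * N + 6 * N + 1 + 2 * n)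
           ((\<lambda>e i. \<Sum>t<N. A ((t + e) mod N) i * B t i) ` {..<n})"
proof -
  have N0: "N > 0"
    using N by simp
  define w where "w = cis (2 * pi / N)"
  have wN: "w ^ N = 1"
    using N0 by (simp add: w_def DeMoivre)
  then have cwN: "cnj w ^ N = 1"
    by (metis complex_cnj_one complex_cnj_power)
  define P where "P j i = dft N w (\<lambda>s. of_real (A s i)) j * dft N (cnj w) (\<lambda>t. of_real (B t i)) j"
    for j i
  define G where "G e i = dft N (cnj w) (\<lambda>j. P j i) e" for e i
  have products: "computable_from (A ` {..<N} \<union> B ` {..<N}) (20 * k * N + 6 * N + 1)
      (complex_parts (P ` {..<N}))"
    unfolding P_def using N wN cwN by (rule computable_dft_products)
  have inverse: "computable_from (complex_parts (P ` {..<N})) (10 * k * N) (complex_parts (G ` {..<N}))"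
    using computable_fft[of "cnj w" k P] cwN unfolding N G_def by simp
  have G: "Re (G e i) / N = (\<Sum>t<N. A ((t + e) mod N) i * B t i)" for e i
  proof -
    have "G e i = of_nat N * (\<Sum>t<N. of_real (A ((t + e) mod N) i) * of_real (B t i))"
      unfolding G_def P_def w_def by (rule dft_correlation[OF N0])
    then show ?thesis
      using N0 by simp
  qed
  have outputs: "computable_from (complex_parts (G ` {..<N})) (\<Sum>e<n. 2)
      (\<Union>e<n. {\<lambda>i. \<Sum>t<N. A ((t + e) mod N) i * B t i})"
  proof (intro computable_from_UN)
    fix e assume "e \<in> {..<n}"
    then have "{\<lambda>i. Re (G e i)} \<subseteq> complex_parts (G ` {..<N})"
      using assms(2) by (auto simp: complex_parts_def)
    moreover have "(\<lambda>i. \<Sum>t<N. A ((t + e) mod N) i * B t i) = (\<lambda>i. 1 / N * Re (G e i))"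
      by (simp add: G)
    ultimately show "computable_from (complex_parts (G ` {..<N})) 2
        {\<lambda>i. \<Sum>t<N. A ((t + e) mod N) i * B t i}"
      using computable_scale[of "\<lambda>i. Re (G e i)" "1 / N"] by (auto elim: computable_from_mono)
  qed simp
  from computable_from_trans[OF computable_from_trans[OF products inverse] outputs] show ?thesis
    by (rule computable_from_mono) auto
qed

definition shifted_sum :: "(nat \<Rightarrow> nat) \<Rightarrow> nat set \<Rightarrow> nat \<Rightarrow> input \<Rightarrow> real" where
  "shifted_sum \<delta> A e = (\<lambda>(f, x). \<Sum>j\<in>A. f (e + \<delta> j) * x j)"

lemma computable_vector_sum:
  "finite S \<Longrightarrow> computable_from {} (2 * card S + 1) {\<lambda>(f, x). \<Sum>j\<in>S. x j}"
proof (induction S rule: finite_induct)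
  case empty
  have "(\<lambda>(f, x). \<Sum>j\<in>{}. x j) = (\<lambda>_. 0 :: real)"
    by auto
  then show ?case
    using computable_const by simp
next
  case (insert j S)
  let ?s = "\<lambda>(f, x). \<Sum>j\<in>S. x j" and ?x = "\<lambda>(f, x). x j"
  have "computable_from {} (2 * card S + 1 + 1) ({?s} \<union> {?x})"
    by (intro computable_from_Un insert.IH computable_vector_entry)
  then have "computable_from {} (2 * card S + 2) {?s, ?x}"
    by (rule computable_from_mono) auto
  from computable_from_trans[OF this computable_add] show ?case
    using insert.hyps by (rule_tac computable_from_mono) (auto simp: add.commute)
qed

text \<open>Since 2n \<le> N, the cyclic index (t + e) mod N never wraps around.\<close>
lemma shifted_sum_eq_correlation:
  assumes "finite A" "\<forall>j\<in>A. \<delta> j < n" "2 * n \<le> N" "e < n"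
  shows "shifted_sum \<delta> A e (f, x) = (\<Sum>t<N. f ((t + e) mod N) * (\<Sum>j\<in>{j\<in>A. \<delta> j = t}. x j))"
proof -
  have "(\<Sum>t<N. f ((t + e) mod N) * (\<Sum>j\<in>{j\<in>A. \<delta> j = t}. x j))
      = (\<Sum>t<N. \<Sum>j\<in>{j\<in>A. \<delta> j = t}. f (e + \<delta> j) * x j)"
    unfolding sum_distrib_left
  proof (intro sum.cong refl)
    fix t j assume "j \<in> {j\<in>A. \<delta> j = t}"
    then have "(t + e) mod N = e + \<delta> j"
      using assms by auto
    then show "f ((t + e) mod N) * x j = f (e + \<delta> j) * x j"
      by simp
  qed
  also have "\<dots> = (\<Sum>j\<in>A. f (e + \<delta> j) * x j)"
    using assms by (intro sum.group) auto
  finally show ?thesis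
    by (simp add: shifted_sum_def)
qed

lemma computable_shifted_sums:
  assumes A: "finite A" "\<forall>j\<in>A. \<delta> j < n" and N: "2 * n \<le> 2 ^ k"
  shows "computable_from {} (30 * k * 2 ^ k + 9 * 2 ^ k + 2 * card A + 1) (shifted_sum \<delta> A ` {..<n})"
proof -
  define N where "N = (2::nat) ^ k"
  define W :: "nat \<Rightarrow> input \<Rightarrow> real" where "W s = (\<lambda>(f, x). f s)" for s
  define X :: "nat \<Rightarrow> input \<Rightarrow> real" where "X t = (\<lambda>(f, x). \<Sum>j\<in>{j\<in>A. \<delta> j = t}. x j)" for t
  have weights: "computable_from {} (\<Sum>s<N. 1) (\<Union>s<N. {W s})"
    unfolding W_def by (intro computable_from_UN computable_fun_value) simp
  have buckets: "computable_from {} (\<Sum>t<N. 2 * card {j\<in>A. \<delta> j = t} + 1) (\<Union>t<N. {X t})"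
    unfolding X_def using A by (intro computable_from_UN computable_vector_sum) auto
  have "\<delta> ` A \<subseteq> {..<N}"
    using A N by (auto simp: N_def)
  then have "(\<Sum>t<N. card {j\<in>A. \<delta> j = t}) = card A"
    using sum.group[of A "{..<N}" \<delta> "\<lambda>_. 1::nat"] A by simp
  then have "(\<Sum>t<N. 2 * card {j\<in>A. \<delta> j = t} + 1) = 2 * card A + N"
    by (simp only: sum.distrib sum_distrib_left[symmetric]) simp
  with computable_from_Un[OF weights buckets]
  have inputs: "computable_from {} (2 * N + 2 * card A) (W ` {..<N} \<union> X ` {..<N})"
    by (rule_tac computable_from_mono) auto
  have "computable_from (W ` {..<N} \<union> X ` {..<N}) (30 * k * N + 6 * N + 1 + 2 * n)
      ((\<lambda>e i. \<Sum>t<N. W ((t + e) mod N) i * X t i) ` {..<n})"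
    using N by (intro computable_cyclic_correlation) (auto simp: N_def)
  moreover have "shifted_sum \<delta> A e = (\<lambda>i. \<Sum>t<N. W ((t + e) mod N) i * X t i)" if "e < n" for e
    using shifted_sum_eq_correlation[OF A _ that, of N] N
    by (auto simp: W_def X_def N_def fun_eq_iff)
  ultimately have "computable_from (W ` {..<N} \<union> X ` {..<N}) (30 * k * N + 6 * N + 1 + 2 * n)
      (shifted_sum \<delta> A ` {..<n})"
    by (auto elim!: computable_from_mono)
  from computable_from_trans[OF inputs this] show ?thesis
    using N by (rule_tac computable_from_mono) (auto simp: N_def)
qed

lemma computable_shifted_sums_card:
  assumes A: "finite A" "A \<noteq> {}" "card A \<le> 2 ^ h" "\<forall>j\<in>A. \<delta> j \<le> card A"
  shows "computable_from {} (600 * card A * (h + 1)) (shifted_sum \<delta> A ` {..card A})"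
proof -
  define a where "a = card A"
  have a: "a \<ge> 1"
    using A by (simp add: a_def Suc_leI card_gt_0_iff)
  define k where "k = ceillog2 (2 * (a + 1))"
  have k_lower: "2 * (a + 1) \<le> 2 ^ k"
    unfolding k_def by (rule le_two_power_ceillog2)
  have k_upper: "2 ^ k \<le> 8 * a"
    using two_power_ceillog2_gt[of "2 * (a + 1)"] a unfolding k_def by simp
  have "k \<le> h + 2"
    using A a unfolding k_def a_def by (subst ceillog2_le_iff) auto
  then have "k * 2 ^ k \<le> (h + 2) * (8 * a)"
    using k_upper by (rule mult_le_mono)
  then have cost: "30 * k * 2 ^ k + 9 * 2 ^ k + 2 * a + 1 \<le> 600 * a * (h + 1)"
    using k_upper a by (simp add: algebra_simps)
  have "computable_from {} (30 * k * 2 ^ k + 9 * 2 ^ k + 2 * a + 1) (shifted_sum \<delta> A ` {..<a + 1})"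
    using A k_lower unfolding a_def by (intro computable_shifted_sums) auto
  then show ?thesis
    by (rule computable_from_mono) (use cost in \<open>auto simp: a_def lessThan_Suc_atMost\<close>)
qed

section \<open>Centroid decompositions\<close>

text \<open>The properties of the recursive centroid decomposition of a tree with distance D used by
  the algorithm: c is the centroid of S, and P are the components of S - {c}.\<close>
inductive centroid_decomposable :: "(nat \<Rightarrow> nat \<Rightarrow> nat) \<Rightarrow> nat set \<Rightarrow> bool" for D where
  centroid_decomposableI: "\<lbrakk>finite S; c \<in> S; S - {c} = \<Union>P; (\<Sum>T\<in>P. card T) \<le> card S; \<forall>j\<in>S. D c j \<le> card S;
    \<forall>T\<in>P. centroid_decomposable D T \<and> 2 * card T \<le> card S \<and>
      (\<forall>i\<in>T. D i c \<le> card T \<and> D c i \<le> card T) \<and> (\<forall>i\<in>T. \<forall>j\<in>S - T. D i j = D i c + D c j)\<rbrakk>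
   \<Longrightarrow> centroid_decomposable D S"

definition mask_row :: "(nat \<Rightarrow> nat \<Rightarrow> nat) \<Rightarrow> nat set \<Rightarrow> nat \<Rightarrow> input \<Rightarrow> real" where
  "mask_row D S i = (\<lambda>(f, x). \<Sum>j\<in>S. f (D i j) * x j)"

lemma mask_row_center: "mask_row D S c = shifted_sum (D c) S 0"
  by (simp add: mask_row_def shifted_sum_def)

lemma mask_row_through_center:
  assumes "finite S" "T \<subseteq> S" "\<forall>j\<in>S - T. D i j = D i c + D c j"
  shows "mask_row D S i =
           (\<lambda>y. mask_row D T i y + shifted_sum (D c) S (D i c) y - shifted_sum (D c) T (D i c) y)"
proof (intro ext, clarify)
  fix f x :: "nat \<Rightarrow> real"
  have "(\<Sum>j\<in>S. f (D i j) * x j) = (\<Sum>j\<in>T. f (D i j) * x j) + (\<Sum>j\<in>S - T. f (D i j) * x j)"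
    using sum.subset_diff[OF assms(2,1)] by (simp add: add.commute)
  also have "(\<Sum>j\<in>S - T. f (D i j) * x j) = (\<Sum>j\<in>S - T. f (D i c + D c j) * x j)"
    using assms(3) by (intro sum.cong) auto
  also have "\<dots> = (\<Sum>j\<in>S. f (D i c + D c j) * x j) - (\<Sum>j\<in>T. f (D i c + D c j) * x j)"
    using sum_diff[OF assms(1,2)] by simp
  finally show "mask_row D S i (f, x) =
      mask_row D T i (f, x) + shifted_sum (D c) S (D i c) (f, x) - shifted_sum (D c) T (D i c) (f, x)"
    by (simp add: mask_row_def shifted_sum_def)
qed

lemma computable_mask_rows_combine:
  assumes S: "finite S" "c \<in> S" "S - {c} = \<Union>P"
    and P: "\<forall>T\<in>P. (\<forall>i\<in>T. D i c \<le> card T) \<and> (\<forall>i\<in>T. \<forall>j\<in>S - T. D i j = D i c + D c j)"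
  shows "computable_from
           ((\<Union>T\<in>P. mask_row D T ` T) \<union> (\<Union>T\<in>P. shifted_sum (D c) T ` (\<lambda>i. D i c) ` T) \<union>
            shifted_sum (D c) S ` {..card S})
           (2 * card S) (mask_row D S ` S)"
  (is "computable_from ?R _ _")
proof -
  have "computable_from ?R (\<Sum>i\<in>S. 2) (\<Union>i\<in>S. {mask_row D S i})"
  proof (intro computable_from_UN S(1))
    fix i assume i: "i \<in> S"
    show "computable_from ?R 2 {mask_row D S i}"
    proof (cases "i = c")
      case True
      then have "{mask_row D S i} \<subseteq> ?R"
        using mask_row_center[of D S c] by auto
      then show ?thesis
        by (rule computable_from_mono[OF computable_from_subset]) auto
    next
      case False
      then obtain T where T: "T \<in> P" "i \<in> T"
        using i S(3) by blast
      then have "T \<subseteq> S" "D i c \<le> card T"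
        using S(3) P by auto
      moreover have "card T \<le> card S"
        using \<open>T \<subseteq> S\<close> S(1) by (rule card_mono[rotated])
      ultimately have "{mask_row D T i, shifted_sum (D c) S (D i c), shifted_sum (D c) T (D i c)} \<subseteq> ?R"
        using T by auto
      moreover have "mask_row D S i =
          (\<lambda>y. mask_row D T i y + shifted_sum (D c) S (D i c) y - shifted_sum (D c) T (D i c) y)"
        using S(1) \<open>T \<subseteq> S\<close> P T by (intro mask_row_through_center) auto
      ultimately show ?thesis
        by (intro computable_from_mono[OF computable_add_diff[of "mask_row D T i"
              "shifted_sum (D c) S (D i c)" "shifted_sum (D c) T (D i c)"]]) auto
    qed
  qed
  then show ?thesis
    by (rule computable_from_mono) auto
qed

lemma computable_part_shifted_sums:
  assumes "finite T" "card T \<le> 2 ^ h" "\<forall>i\<in>T. D i c \<le> card T \<and> D c i \<le> card T"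
  shows "computable_from {} (600 * (h + 1) * card T) (shifted_sum (D c) T ` (\<lambda>i. D i c) ` T)"
proof (cases "T = {}")
  case False
  then have "computable_from {} (600 * card T * (h + 1)) (shifted_sum (D c) T ` {..card T})"
    using assms by (intro computable_shifted_sums_card) auto
  then show ?thesis
    by (rule computable_from_mono) (use assms(3) in \<open>auto simp: algebra_simps\<close>)
qed (simp add: computable_from_subset)

text \<open>The constant closes the recurrence: 1210 (2h + 1) \<ge> 1200 (h + 1) + 2.\<close>
lemma computable_mask_rows_step:
  assumes S: "finite S" "c \<in> S" "S - {c} = \<Union>P" "(\<Sum>T\<in>P. card T) \<le> card S"
      "\<forall>j\<in>S. D c j \<le> card S" "card S \<le> 2 ^ h"
    and parts: "\<forall>T\<in>P. (\<forall>i\<in>T. D i c \<le> card T \<and> D c i \<le> card T) \<and>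
      (\<forall>i\<in>T. \<forall>j\<in>S - T. D i j = D i c + D c j)"
    and children: "\<And>T. T \<in> P \<Longrightarrow> computable_from {} (1210 * h\<^sup>2 * card T) (mask_row D T ` T)"
  shows "computable_from {} (1210 * card S * (h + 1)\<^sup>2) (mask_row D S ` S)"
proof -
  have "finite P"
    using S(1,3) by (metis finite_Diff finite_UnionD)
  have part: "finite T" "card T \<le> card S" if "T \<in> P" for T
    using S(1,3) that by (auto intro: card_mono finite_subset)
  have rows: "computable_from {} (1210 * h\<^sup>2 * card S) (\<Union>T\<in>P. mask_row D T ` T)"
    using \<open>finite P\<close> children S(4) by (rule computable_from_UN_card)
  have around: "computable_from {} (600 * (h + 1) * card S)
      (\<Union>T\<in>P. shifted_sum (D c) T ` (\<lambda>i. D i c) ` T)"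
    using \<open>finite P\<close> _ S(4)
  proof (rule computable_from_UN_card)
    fix T assume T: "T \<in> P"
    then have "card T \<le> 2 ^ h"
      using part(2) S(6) order_trans by blast
    then show "computable_from {} (600 * (h + 1) * card T) (shifted_sum (D c) T ` (\<lambda>i. D i c) ` T)"
      using parts T part(1) by (intro computable_part_shifted_sums) auto
  qed
  have center: "computable_from {} (600 * card S * (h + 1)) (shifted_sum (D c) S ` {..card S})"
    using S by (intro computable_shifted_sums_card) auto
  have combine: "computable_from
      ((\<Union>T\<in>P. mask_row D T ` T) \<union> (\<Union>T\<in>P. shifted_sum (D c) T ` (\<lambda>i. D i c) ` T) \<union>
       shifted_sum (D c) S ` {..card S})
      (2 * card S) (mask_row D S ` S)"
    using S parts by (intro computable_mask_rows_combine) auto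
  have "1210 * h\<^sup>2 * card S + 600 * (h + 1) * card S + 600 * card S * (h + 1) + 2 * card S
      \<le> 1210 * card S * (h + 1)\<^sup>2"
    by (simp add: power2_eq_square algebra_simps)
  with computable_from_trans[OF computable_from_Un[OF computable_from_Un[OF rows around] center] combine]
  show ?thesis
    by (rule_tac computable_from_mono) auto
qed

lemma computable_mask_rows_child:
  assumes "finite T" "2 * card T \<le> 2 ^ h"
    and IH: "\<forall>h. card T \<le> 2 ^ h \<longrightarrow> computable_from {} (1210 * card T * (h + 1)\<^sup>2) (mask_row D T ` T)"
  shows "computable_from {} (1210 * h\<^sup>2 * card T) (mask_row D T ` T)"
proof (cases "T = {}")
  case True
  then show ?thesis
    using computable_from_subset[of "{}" "{}"] by simp
next
  case False
  then have "card T \<ge> 1"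
    using assms(1) by (simp add: Suc_leI card_gt_0_iff)
  then have "h \<noteq> 0"
    using assms(2) by (intro notI) simp
  then have "card T \<le> 2 ^ (h - 1)"
    using assms(2) by (cases h) auto
  with IH have "computable_from {} (1210 * card T * (h - 1 + 1)\<^sup>2) (mask_row D T ` T)"
    by blast
  then show ?thesis
    using \<open>h \<noteq> 0\<close> by (simp add: mult_ac)
qed

lemma computable_mask_rows:
  assumes "centroid_decomposable D S" "card S \<le> 2 ^ h"
  shows "computable_from {} (1210 * card S * (h + 1)\<^sup>2) (mask_row D S ` S)"
proof -
  have "\<forall>h. card S \<le> 2 ^ h \<longrightarrow> computable_from {} (1210 * card S * (h + 1)\<^sup>2) (mask_row D S ` S)"
    using assms(1)
  proof (induction rule: centroid_decomposable.induct)
    case (centroid_decomposableI S c P)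
    show ?case
    proof (intro allI impI)
      fix h assume h: "card S \<le> 2 ^ h"
      have "computable_from {} (1210 * h\<^sup>2 * card T) (mask_row D T ` T)" if "T \<in> P" for T
      proof (rule computable_mask_rows_child)
        show "finite T"
          using centroid_decomposableI.hyps(1,3) that by (auto intro: finite_subset)
      qed (use centroid_decomposableI.IH that h in auto)
      with centroid_decomposableI.hyps centroid_decomposableI.IH h
      show "computable_from {} (1210 * card S * (h + 1)\<^sup>2) (mask_row D S ` S)"
        by (intro computable_mask_rows_step[of S c P]) auto
    qed
  qed
  then show ?thesis
    using assms(2) by blast
qed

section \<open>Walks, components and distances\<close>

lemma is_walk_Nil [simp]: "\<not> is_walk E []"
  by (simp add: is_walk_def)

lemma is_walk_singleton [simp]: "is_walk E [a]"
  by (simp add: is_walk_def)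

lemma is_walk_Cons_Cons [simp]: "is_walk E (a # b # ws) \<longleftrightarrow> {a, b} \<in> E \<and> is_walk E (b # ws)"
  unfolding is_walk_def
proof safe
  assume walk: "\<forall>k. Suc k < length (a # b # ws) \<longrightarrow> {(a # b # ws) ! k, (a # b # ws) ! Suc k} \<in> E"
  show "{a, b} \<in> E"
    using walk[rule_format, of 0] by simp
  fix k assume "Suc k < length (b # ws)"
  then show "{(b # ws) ! k, (b # ws) ! Suc k} \<in> E"
    using walk[rule_format, of "Suc k"] by simp
next
  fix k assume "{a, b} \<in> E" "\<forall>k. Suc k < length (b # ws) \<longrightarrow> {(b # ws) ! k, (b # ws) ! Suc k} \<in> E"
    and "Suc k < length (a # b # ws)"
  then show "{(a # b # ws) ! k, (a # b # ws) ! Suc k} \<in> E"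
    by (cases k) auto
qed

lemma is_walk_append_iff:
  "is_walk E (xs @ a # ys) \<longleftrightarrow> is_walk E (xs @ [a]) \<and> is_walk E (a # ys)"
proof (induction xs rule: induct_list012)
  case (3 x y zs)
  then show ?case by simp
qed simp_all

lemma is_walk_rev [simp]: "is_walk E (rev ws) \<longleftrightarrow> is_walk E ws"
proof -
  have "is_walk E (rev ws)" if "is_walk E ws" for ws
    using that
  proof (induction ws rule: induct_list012)
    case (3 x y zs)
    then show ?case
      using is_walk_append_iff[of E "rev zs" y "[x]"] by (simp add: insert_commute)
  qed auto
  from this[of ws] this[of "rev ws"] show ?thesis
    by auto
qed

lemma is_walk_take: "is_walk E ws \<Longrightarrow> 0 < k \<Longrightarrow> is_walk E (take k ws)"
  unfolding is_walk_def by simp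

definition connected_in :: "nat set set \<Rightarrow> nat set \<Rightarrow> nat \<Rightarrow> nat \<Rightarrow> bool" where
  "connected_in E A a b \<longleftrightarrow> (\<exists>ws. is_walk E ws \<and> hd ws = a \<and> last ws = b \<and> set ws \<subseteq> A)"

lemma connected_in_refl: "a \<in> A \<Longrightarrow> connected_in E A a a"
  unfolding connected_in_def by (intro exI[of _ "[a]"]) simp

lemma connected_in_mem: "connected_in E A a b \<Longrightarrow> a \<in> A \<and> b \<in> A"
  unfolding connected_in_def by (metis hd_in_set last_in_set is_walk_Nil subsetD)

lemma connected_in_mono: "connected_in E A a b \<Longrightarrow> A \<subseteq> B \<Longrightarrow> connected_in E B a b"
  unfolding connected_in_def by blast

lemma connected_in_edge: "{a, b} \<in> E \<Longrightarrow> a \<in> A \<Longrightarrow> b \<in> A \<Longrightarrow> connected_in E A a b"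
  unfolding connected_in_def by (intro exI[of _ "[a, b]"]) simp

lemma connected_in_sym: "connected_in E A a b \<Longrightarrow> connected_in E A b a"
proof -
  assume "connected_in E A a b"
  then obtain ws where "is_walk E ws" "hd ws = a" "last ws = b" "set ws \<subseteq> A"
    unfolding connected_in_def by blast
  moreover have "ws \<noteq> []"
    using calculation(1) by auto
  ultimately show ?thesis
    unfolding connected_in_def by (intro exI[of _ "rev ws"]) (simp add: hd_rev last_rev)
qed

lemma connected_in_trans: "connected_in E A a b \<Longrightarrow> connected_in E A b c \<Longrightarrow> connected_in E A a c"
proof -
  assume "connected_in E A a b" "connected_in E A b c"
  then obtain xs ys where xs: "is_walk E xs" "hd xs = a" "last xs = b" "set xs \<subseteq> A"
    and ys: "is_walk E ys" "hd ys = b" "last ys = c" "set ys \<subseteq> A"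
    unfolding connected_in_def by blast
  obtain xs' where xs': "xs = xs' @ [b]"
    using xs(1,3) by (metis append_butlast_last_id is_walk_Nil)
  obtain ys' where ys': "ys = b # ys'"
    using ys(1,2) by (metis list.collapse is_walk_Nil)
  have "is_walk E (xs' @ b # ys')"
    using xs(1) ys(1) is_walk_append_iff[of E xs' b ys'] unfolding xs' ys' by simp
  moreover have "hd (xs' @ b # ys') = a" "last (xs' @ b # ys') = c"
    using xs(2) ys(3) unfolding xs' ys' by (cases xs'; simp)+
  moreover have "set (xs' @ b # ys') \<subseteq> A"
    using xs(4) ys(4) unfolding xs' ys' by simp
  ultimately show ?thesis
    unfolding connected_in_def by blast
qed

lemma connected_in_prefix:
  assumes "is_walk E ws" "set ws \<subseteq> A" "v \<in> set ws"
  shows "connected_in E A (hd ws) v"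
proof -
  obtain k where k: "k < length ws" "ws ! k = v"
    using assms(3) by (meson in_set_conv_nth)
  have "is_walk E (take (Suc k) ws)"
    using assms(1) by (simp add: is_walk_take)
  moreover have "hd (take (Suc k) ws) = hd ws"
    by simp
  moreover have "last (take (Suc k) ws) = v"
    using k by (simp add: take_Suc_conv_app_nth)
  moreover have "set (take (Suc k) ws) \<subseteq> A"
    using assms(2) set_take_subset by fastforce
  ultimately show ?thesis
    unfolding connected_in_def by blast
qed

lemma connected_in_first_hit_walk:
  "is_walk E (a # ws) \<Longrightarrow> set (a # ws) \<subseteq> A \<Longrightarrow> c \<in> set ws \<Longrightarrow> a \<noteq> c \<Longrightarrow>
    \<exists>b. {b, c} \<in> E \<and> connected_in E (A - {c}) a b"
proof (induction ws arbitrary: a)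
  case (Cons a' ws)
  show ?case
  proof (cases "a' = c")
    case True
    then show ?thesis
      using Cons.prems by (intro exI[of _ a]) (auto intro: connected_in_refl)
  next
    case False
    then obtain b where "{b, c} \<in> E" "connected_in E (A - {c}) a' b"
      using Cons by auto
    moreover have "connected_in E (A - {c}) a a'"
      using Cons.prems False by (intro connected_in_edge) auto
    ultimately show ?thesis
      using connected_in_trans by blast
  qed
qed simp

lemma connected_in_first_hit:
  assumes "connected_in E A a c" "a \<noteq> c"
  shows "\<exists>b. {b, c} \<in> E \<and> connected_in E (A - {c}) a b"
proof -
  obtain ws where ws: "is_walk E ws" "hd ws = a" "last ws = c" "set ws \<subseteq> A"
    using assms(1) unfolding connected_in_def by blast
  then obtain ws' where ws': "ws = a # ws'"
    by (metis is_walk_Nil list.collapse)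
  then have "c \<in> set ws'"
    using ws(3) assms(2) by (metis last_ConsL last_ConsR last_in_set)
  then show ?thesis
    using ws assms(2) connected_in_first_hit_walk[of E a ws' A c] unfolding ws' by blast
qed

definition component_in :: "nat set set \<Rightarrow> nat set \<Rightarrow> nat \<Rightarrow> nat set" where
  "component_in E A a = {b. connected_in E A a b}"

lemma component_in_eq: "connected_in E A a b \<Longrightarrow> component_in E A b = component_in E A a"
proof -
  assume ab: "connected_in E A a b"
  have "connected_in E A b y \<longleftrightarrow> connected_in E A a y" for y
    using connected_in_trans[OF ab] connected_in_trans[OF connected_in_sym[OF ab]] by blast
  then show ?thesis
    unfolding component_in_def by blast
qed

lemma component_in_subset: "component_in E A a \<subseteq> A"
  unfolding component_in_def using connected_in_mem by blast

lemma component_in_self: "a \<in> A \<Longrightarrow> a \<in> component_in E A a"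
  unfolding component_in_def by (simp add: connected_in_refl)

lemma connected_in_component: "connected_in E A a b \<Longrightarrow> connected_in E (component_in E A a) a b"
proof -
  assume "connected_in E A a b"
  then obtain ws where ws: "is_walk E ws" "hd ws = a" "last ws = b" "set ws \<subseteq> A"
    unfolding connected_in_def by blast
  then have "set ws \<subseteq> component_in E A a"
    unfolding component_in_def using connected_in_prefix by blast
  with ws show ?thesis
    unfolding connected_in_def by blast
qed

lemma component_in_connected:
  assumes "x \<in> component_in E A a" "y \<in> component_in E A a"
  shows "connected_in E (component_in E A a) x y"
proof -
  have ax: "connected_in E A a x" and ay: "connected_in E A a y"
    using assms unfolding component_in_def by simp_all
  then have "connected_in E (component_in E A x) x y"
    using connected_in_component connected_in_trans[OF connected_in_sym[OF ax] ay] by blast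
  then show ?thesis
    unfolding component_in_eq[OF ax] .
qed

lemma component_in_disjoint:
  assumes "z \<in> component_in E A x" "z \<in> component_in E A y"
  shows "component_in E A x = component_in E A y"
proof -
  have "connected_in E A x z" "connected_in E A y z"
    using assms by (simp_all add: component_in_def)
  then show ?thesis
    using component_in_eq by metis
qed

lemma Union_components: "\<Union>(component_in E A ` A) = A"
proof
  show "\<Union>(component_in E A ` A) \<subseteq> A"
    using component_in_subset by blast
  show "A \<subseteq> \<Union>(component_in E A ` A)"
    using component_in_self by blast
qed

lemma sum_card_components:
  assumes "finite A"
  shows "(\<Sum>T\<in>component_in E A ` A. card T) = card A"
proof -
  note Union_components
  moreover have "pairwise disjnt (component_in E A ` A)"
  proof (rule pairwiseI)
    fix X Y assume "X \<in> component_in E A ` A" "Y \<in> component_in E A ` A" "X \<noteq> Y"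
    then show "disjnt X Y"
      unfolding disjnt_def using component_in_disjoint by blast
  qed
  moreover have "finite T" if "T \<in> component_in E A ` A" for T
    using that finite_subset[OF component_in_subset assms] by blast
  ultimately show ?thesis
    using card_Union_disjoint[of "component_in E A ` A"] by simp
qed

lemma tree_dist_less_length: "is_walk E ws \<Longrightarrow> tree_dist E (hd ws) (last ws) < length ws"
proof -
  assume ws: "is_walk E ws"
  then have "length ws = Suc (length ws - 1)"
    by (cases ws) auto
  then have "tree_dist E (hd ws) (last ws) \<le> length ws - 1"
    unfolding tree_dist_def using ws by (intro Least_le) blast
  then show ?thesis
    using ws by (cases ws) auto
qed

lemma shortest_walk:
  assumes "connected_in E A i j"
  obtains ws where "is_walk E ws" "hd ws = i" "last ws = j" "length ws = Suc (tree_dist E i j)"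
proof -
  obtain ws where ws: "is_walk E ws" "hd ws = i" "last ws = j"
    using assms unfolding connected_in_def by blast
  then have "length ws = Suc (length ws - 1)"
    by (cases ws) auto
  with ws have "\<exists>n ws. is_walk E ws \<and> hd ws = i \<and> last ws = j \<and> length ws = Suc n"
    by blast
  then have "\<exists>ws. is_walk E ws \<and> hd ws = i \<and> last ws = j \<and> length ws = Suc (tree_dist E i j)"
    unfolding tree_dist_def by (rule LeastI_ex)
  then show ?thesis
    using that by blast
qed

lemma tree_dist_self [simp]: "tree_dist E c c = 0"
  using tree_dist_less_length[of E "[c]"] by simp

lemma tree_dist_triangle:
  assumes "connected_in E A i c" "connected_in E A c j"
  shows "tree_dist E i j \<le> tree_dist E i c + tree_dist E c j"
proof -
  obtain xs where xs: "is_walk E (xs @ [c])" "hd (xs @ [c]) = i" "length xs = tree_dist E i c"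
    using shortest_walk[OF assms(1)] by (metis append_butlast_last_id is_walk_Nil length_butlast diff_Suc_1)
  obtain ys where ys: "is_walk E (c # ys)" "last (c # ys) = j" "length ys = tree_dist E c j"
    using shortest_walk[OF assms(2)] by (metis list.collapse is_walk_Nil length_tl diff_Suc_1)
  have "is_walk E (xs @ c # ys)"
    using xs(1) ys(1) is_walk_append_iff by blast
  moreover have "hd (xs @ c # ys) = i" "last (xs @ c # ys) = j"
    using xs(2) ys(2) by (cases xs; simp)+
  ultimately have "tree_dist E i j < length (xs @ c # ys)"
    using tree_dist_less_length by metis
  then show ?thesis
    using xs(3) ys(3) by simp
qed

lemma tree_dist_through:
  assumes "connected_in E A i j" and through: "\<forall>ws. is_walk E ws \<and> hd ws = i \<and> last ws = j \<longrightarrow> c \<in> set ws"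
  shows "tree_dist E i j = tree_dist E i c + tree_dist E c j"
proof -
  obtain ws where ws: "is_walk E ws" "hd ws = i" "last ws = j" "length ws = Suc (tree_dist E i j)"
    using shortest_walk[OF assms(1)] by blast
  then have "c \<in> set ws"
    using through by blast
  then obtain xs ys where split: "ws = xs @ c # ys"
    by (meson split_list)
  have "is_walk E (xs @ [c])" "is_walk E (c # ys)"
    using ws(1) is_walk_append_iff unfolding split by blast+
  moreover have "hd (xs @ [c]) = i"
    using ws(2) unfolding split by (cases xs) simp_all
  moreover have "last (c # ys) = j"
    using ws(3) unfolding split by (cases ys) simp_all
  ultimately have "tree_dist E i c < Suc (length xs)" "tree_dist E c j < Suc (length ys)"
    using tree_dist_less_length by (metis last_snoc length_append_singleton, metis list.sel(1) length_Cons)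
  moreover have "connected_in E UNIV i c" "connected_in E UNIV c j"
    using \<open>is_walk E (xs @ [c])\<close> \<open>hd (xs @ [c]) = i\<close> \<open>is_walk E (c # ys)\<close> \<open>last (c # ys) = j\<close>
    unfolding connected_in_def by (metis last_snoc subset_UNIV, metis list.sel(1) subset_UNIV)
  ultimately show ?thesis
    using ws(4) tree_dist_triangle unfolding split by fastforce
qed

lemma distinct_walk:
  "is_walk E ws \<Longrightarrow> \<exists>ds. is_walk E ds \<and> hd ds = hd ws \<and> last ds = last ws \<and> distinct ds \<and> set ds \<subseteq> set ws"
proof (induction ws rule: induct_list012)
  case (2 a)
  then show ?case by (intro exI[of _ "[a]"]) simp
next
  case (3 a b zs)
  then obtain ds where ds: "is_walk E ds" "hd ds = b" "last ds = last (b # zs)" "distinct ds"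
    "set ds \<subseteq> set (b # zs)"
    by auto
  show ?case
  proof (cases "a \<in> set ds")
    case True
    then obtain xs ys where split: "ds = xs @ a # ys"
      by (meson split_list)
    have "is_walk E (a # ys)"
      using ds(1) is_walk_append_iff unfolding split by blast
    then show ?thesis
      using ds unfolding split by (intro exI[of _ "a # ys"]) auto
  next
    case False
    obtain ds' where "ds = b # ds'"
      using ds(1,2) by (metis is_walk_Nil list.collapse)
    then show ?thesis
      using ds False 3(3) by (intro exI[of _ "a # ds"]) auto
  qed
qed simp

lemma tree_dist_less_card:
  assumes "connected_in E A a b" "finite A"
  shows "tree_dist E a b < card A"
proof -
  obtain ws where ws: "is_walk E ws" "hd ws = a" "last ws = b" "set ws \<subseteq> A"
    using assms(1) unfolding connected_in_def by blast
  then obtain ds where ds: "is_walk E ds" "hd ds = a" "last ds = b" "distinct ds" "set ds \<subseteq> A"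
    using distinct_walk by blast
  have "tree_dist E a b < length ds"
    using tree_dist_less_length[OF ds(1)] ds(2,3) by simp
  also have "length ds \<le> card A"
    using ds(4,5) assms(2) by (metis card_mono distinct_card)
  finally show ?thesis .
qed

section \<open>Trees\<close>

lemma tree_edge_vertices: "is_tree L E \<Longrightarrow> {a, b} \<in> E \<Longrightarrow> a < L \<and> b < L \<and> a \<noteq> b"
  unfolding is_tree_def by (metis doubleton_eq_iff)

lemma tree_walk_vertices: "is_tree L E \<Longrightarrow> is_walk E ws \<Longrightarrow> hd ws < L \<Longrightarrow> set ws \<subseteq> {..<L}"
proof (induction ws rule: induct_list012)
  case (3 a b zs)
  then show ?case
    using tree_edge_vertices[of L E a b] by auto
qed auto

lemma tree_connected: "is_tree L E \<Longrightarrow> i < L \<Longrightarrow> j < L \<Longrightarrow> connected_in E {..<L} i j"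
  unfolding connected_in_def by (metis is_tree_def tree_walk_vertices)

lemma shortest_walk_predecessor:
  assumes "connected_in F A r v" "v \<noteq> r"
  obtains u where "{u, v} \<in> F" "tree_dist F r u < tree_dist F r v"
proof -
  define d where "d = tree_dist F r v"
  obtain ws where ws: "is_walk F ws" "hd ws = r" "last ws = v" "length ws = Suc d"
    using shortest_walk[OF assms(1)] unfolding d_def by blast
  have "d \<noteq> 0"
  proof
    assume "d = 0"
    then obtain a where "ws = [a]"
      using ws(4) by (cases ws) auto
    then show False
      using ws(2,3) assms(2) by simp
  qed
  then obtain k where k: "d = Suc k"
    using not0_implies_Suc by blast
  have "ws \<noteq> []"
    using ws(4) by auto
  then have "ws ! Suc k = v"
    using ws(3,4) k by (simp add: last_conv_nth)
  moreover have "{ws ! k, ws ! Suc k} \<in> F"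
    using ws(1,4) unfolding is_walk_def k by simp
  ultimately have "{ws ! k, v} \<in> F"
    by simp
  moreover have "tree_dist F r (ws ! k) < d"
  proof -
    have "is_walk F (take d ws)"
      using ws(1) k by (simp add: is_walk_take)
    moreover have "hd (take d ws) = r"
      using ws(2) k by simp
    moreover have "last (take d ws) = ws ! k"
      using ws(4) k by (simp add: take_Suc_conv_app_nth)
    ultimately show ?thesis
      using tree_dist_less_length[of F "take d ws"] ws(4) by simp
  qed
  ultimately show ?thesis
    using that unfolding d_def by blast
qed

text \<open>The last edges of shortest walks from 0 to the other vertices are pairwise distinct.\<close>
lemma card_edges_ge_connected:
  assumes "finite F" "\<forall>v<L. connected_in F UNIV 0 v"
  shows "L - 1 \<le> card F"
proof -
  have "\<forall>v\<in>{1..<L}. \<exists>u. {u, v} \<in> F \<and> tree_dist F 0 u < tree_dist F 0 v"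
  proof
    fix v assume "v \<in> {1..<L}"
    then have "connected_in F UNIV 0 v" "v \<noteq> 0"
      using assms(2) by auto
    then show "\<exists>u. {u, v} \<in> F \<and> tree_dist F 0 u < tree_dist F 0 v"
      by (metis shortest_walk_predecessor)
  qed
  from bchoice[OF this] obtain pred
    where pred: "\<forall>v\<in>{1..<L}. {pred v, v} \<in> F \<and> tree_dist F 0 (pred v) < tree_dist F 0 v"
    by blast
  have "inj_on (\<lambda>v. {pred v, v}) {1..<L}"
  proof (rule inj_onI)
    fix v v' assume v: "v \<in> {1..<L}" and v': "v' \<in> {1..<L}" and eq: "{pred v, v} = {pred v', v'}"
    show "v = v'"
    proof (rule ccontr)
      assume "v \<noteq> v'"
      then have "pred v = v'" "pred v' = v"
        using eq by (auto simp: doubleton_eq_iff)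
      moreover have "tree_dist F 0 (pred v) < tree_dist F 0 v" "tree_dist F 0 (pred v') < tree_dist F 0 v'"
        using pred v v' by auto
      ultimately show False
        by simp
    qed
  qed
  moreover have "(\<lambda>v. {pred v, v}) ` {1..<L} \<subseteq> F"
    using pred by blast
  ultimately have "card {1..<L} \<le> card F"
    using card_mono[OF assms(1)] card_image by metis
  then show ?thesis
    by simp
qed

lemma connected_in_reroute:
  assumes "\<forall>a b. {a, b} \<in> E \<longrightarrow> connected_in F UNIV a b"
  shows "is_walk E ws \<Longrightarrow> connected_in F UNIV (hd ws) (last ws)"
proof (induction ws rule: induct_list012)
  case (3 a b zs)
  then have "connected_in F UNIV a b" "connected_in F UNIV b (last (b # zs))"
    using assms by auto
  then show ?case
    using connected_in_trans[of F UNIV a b "last (b # zs)"] by simp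
qed (simp_all add: connected_in_refl)

text \<open>Otherwise deleting the edge would leave a connected graph with L - 2 edges.\<close>
lemma tree_edge_bridge:
  assumes t: "is_tree L E" and e: "{u, v} \<in> E"
  shows "\<not> connected_in (E - {{u, v}}) UNIV u v"
proof
  define F where "F = E - {{u, v}}"
  assume uv: "connected_in (E - {{u, v}}) UNIV u v"
  have reroute: "\<forall>a b. {a, b} \<in> E \<longrightarrow> connected_in F UNIV a b"
  proof (intro allI impI)
    fix a b assume ab: "{a, b} \<in> E"
    show "connected_in F UNIV a b"
    proof (cases "{a, b} = {u, v}")
      case True
      then have "a = u \<and> b = v \<or> a = v \<and> b = u"
        by (auto simp: doubleton_eq_iff)
      then show ?thesis
        using uv connected_in_sym[OF uv] unfolding F_def by auto
    next
      case False
      then show ?thesis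
        using ab unfolding F_def by (intro connected_in_edge) auto
    qed
  qed
  have L: "finite E" "card E = L - 1" "u < L" "v < L" "u \<noteq> v"
    using t tree_edge_vertices[OF t e] unfolding is_tree_def by auto
  have "connected_in F UNIV 0 x" if "x < L" for x
  proof -
    obtain ws where "is_walk E ws" "hd ws = 0" "last ws = x"
      using t \<open>x < L\<close> L(3) unfolding is_tree_def by fastforce
    then show ?thesis
      using connected_in_reroute[OF reroute] by metis
  qed
  then have "L - 1 \<le> card F"
    using L(1) unfolding F_def by (intro card_edges_ge_connected) auto
  moreover have "card F = card E - 1"
    using L(1) e unfolding F_def by simp
  ultimately show False
    using L by linarith
qed

lemma is_walk_remove_edge: "is_walk E ws \<Longrightarrow> c \<notin> set ws \<Longrightarrow> c \<in> e \<Longrightarrow> is_walk (E - {e}) ws"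
  by (induction ws rule: induct_list012) auto

lemma tree_neighbors_separated:
  assumes t: "is_tree L E" and ab: "connected_in E (- {c}) a b" and "{a, c} \<in> E" "{b, c} \<in> E"
  shows "a = b"
proof (rule ccontr)
  assume "a \<noteq> b"
  obtain ws' where ws': "is_walk E ws'" "hd ws' = a" "last ws' = b" "set ws' \<subseteq> - {c}"
    using ab unfolding connected_in_def by blast
  then obtain ws where "ws' = ws @ [b]"
    by (metis append_butlast_last_id is_walk_Nil)
  with ws' have ws: "is_walk E (ws @ [b])" "hd (ws @ [b]) = a" "set (ws @ [b]) \<subseteq> - {c}"
    by simp_all
  then have "is_walk (E - {{a, c}}) (ws @ [b])"
    by (intro is_walk_remove_edge) auto
  moreover have "{b, c} \<in> E - {{a, c}}"
    using \<open>{b, c} \<in> E\<close> \<open>a \<noteq> b\<close> ws(3) by (auto simp: doubleton_eq_iff)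
  ultimately have "is_walk (E - {{a, c}}) (ws @ [b, c])"
    using is_walk_append_iff[of _ ws b "[c]"] by simp
  moreover have "hd (ws @ [b, c]) = a"
    using ws(2) by (cases ws) auto
  ultimately have "connected_in (E - {{a, c}}) UNIV a c"
    unfolding connected_in_def by (intro exI[of _ "ws @ [b, c]"]) simp
  then show False
    using tree_edge_bridge[OF t \<open>{a, c} \<in> E\<close>] by simp
qed

section \<open>Centroids of trees\<close>

lemma center_neighbor:
  assumes "\<forall>a\<in>S. \<forall>b\<in>S. connected_in E S a b" "c \<in> S" "a \<in> S - {c}"
  obtains b where "{b, c} \<in> E" "connected_in E (S - {c}) a b"
proof -
  have "connected_in E S a c" "a \<noteq> c"
    using assms by auto
  then show ?thesis
    using connected_in_first_hit that by blast
qed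

lemma tree_dist_through_center:
  assumes t: "is_tree L E" and S: "\<forall>a\<in>S. \<forall>b\<in>S. connected_in E S a b" "c \<in> S"
    and i: "i \<in> S - {c}" and j: "j \<in> S" "j \<notin> component_in E (S - {c}) i"
  shows "tree_dist E i j = tree_dist E i c + tree_dist E c j"
proof (cases "j = c")
  case False
  have "connected_in E S i j"
    using S(1) i j(1) by blast
  then show ?thesis
  proof (rule tree_dist_through, intro allI impI)
    fix ws assume ws: "is_walk E ws \<and> hd ws = i \<and> last ws = j"
    show "c \<in> set ws"
    proof (rule ccontr)
      assume "c \<notin> set ws"
      then have ij: "connected_in E (- {c}) i j"
        using ws unfolding connected_in_def by blast
      obtain a where a: "{a, c} \<in> E" "connected_in E (S - {c}) i a"
        using center_neighbor[OF S i] by blast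
      obtain b where b: "{b, c} \<in> E" "connected_in E (S - {c}) j b"
        using center_neighbor[OF S] j(1) False by blast
      have "S - {c} \<subseteq> - {c}"
        by blast
      then have "connected_in E (- {c}) a i" "connected_in E (- {c}) j b"
        using connected_in_sym[OF a(2)] b(2) by (auto intro: connected_in_mono)
      then have "connected_in E (- {c}) a b"
        using ij by (blast intro: connected_in_trans)
      then have "a = b"
        using tree_neighbors_separated[OF t _ a(1) b(1)] by simp
      then have "connected_in E (S - {c}) i j"
        using a(2) connected_in_sym[OF b(2)] by (blast intro: connected_in_trans)
      then show False
        using j(2) unfolding component_in_def by simp
    qed
  qed
qed simp

lemma tree_dist_center_le_card_component:
  assumes "finite S" "\<forall>a\<in>S. \<forall>b\<in>S. connected_in E S a b" "c \<in> S" "i \<in> S - {c}"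
  shows "tree_dist E i c \<le> card (component_in E (S - {c}) i)"
    and "tree_dist E c i \<le> card (component_in E (S - {c}) i)"
proof -
  define T where "T = component_in E (S - {c}) i"
  obtain b where b: "{b, c} \<in> E" "connected_in E (S - {c}) i b"
    using center_neighbor[OF assms(2-4)] by blast
  have ib: "connected_in E T i b"
    unfolding T_def using b(2) by (rule connected_in_component)
  then have "b \<in> T"
    using connected_in_mem by blast
  then have "connected_in E (insert c T) b c"
    using b(1) by (intro connected_in_edge) auto
  moreover have "connected_in E (insert c T) i b"
    using ib by (rule connected_in_mono) blast
  ultimately have ic: "connected_in E (insert c T) i c"
    by (rule connected_in_trans[rotated])
  have "T \<subseteq> S - {c}"
    unfolding T_def by (rule component_in_subset)
  then have "finite T" "c \<notin> T"
    using assms(1) by (auto intro: finite_subset)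
  then have "finite (insert c T)" "card (insert c T) = Suc (card T)"
    by simp_all
  then show "tree_dist E i c \<le> card T" "tree_dist E c i \<le> card T"
    using tree_dist_less_card[OF ic] tree_dist_less_card[OF connected_in_sym[OF ic]] by simp_all
qed

lemma tree_component_through_center_disjoint:
  assumes t: "is_tree L E" and c: "c \<in> S" and u: "{u, c} \<in> E" "connected_in E (S - {c}) a u"
    and w: "c \<in> component_in E (S - {u}) w"
  shows "component_in E (S - {u}) w \<inter> component_in E (S - {c}) a = {}"
proof (rule ccontr)
  assume "component_in E (S - {u}) w \<inter> component_in E (S - {c}) a \<noteq> {}"
  then obtain x where x: "x \<in> component_in E (S - {u}) w" "x \<in> component_in E (S - {c}) a"
    by blast
  then have "connected_in E (S - {u}) x c"
    using w unfolding component_in_def by (blast intro: connected_in_trans connected_in_sym)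
  moreover have "x \<noteq> c"
    using x(2) component_in_subset by blast
  ultimately obtain b where b: "{b, c} \<in> E" "connected_in E (S - {u} - {c}) x b"
    using connected_in_first_hit by blast
  have "connected_in E (S - {c}) a x"
    using x(2) unfolding component_in_def by simp
  moreover have "connected_in E (S - {c}) x b"
    using b(2) by (rule connected_in_mono) blast
  ultimately have "connected_in E (S - {c}) u b"
    using u(2) by (blast intro: connected_in_trans connected_in_sym)
  then have "connected_in E (- {c}) u b"
    by (rule connected_in_mono) blast
  then have "u = b"
    using tree_neighbors_separated[OF t _ u(1) b(1)] by simp
  then show False
    using connected_in_mem[OF b(2)] by blast
qed

lemma component_avoiding_center_subset:
  assumes S: "\<forall>a\<in>S. \<forall>b\<in>S. connected_in E S a b" "c \<in> S"
    and u: "{u, c} \<in> E" "connected_in E (S - {c}) a u"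
    and w: "c \<notin> component_in E (S - {u}) w"
  shows "component_in E (S - {u}) w \<subseteq> component_in E (S - {c}) a - {u}"
proof
  fix x assume x: "x \<in> component_in E (S - {u}) w"
  then have xS: "x \<in> S - {u}"
    using component_in_subset by blast
  have "x \<in> component_in E (S - {c}) a"
  proof (rule ccontr)
    assume xa: "x \<notin> component_in E (S - {c}) a"
    have "x \<noteq> c"
      using x w by blast
    then obtain b where b: "{b, c} \<in> E" "connected_in E (S - {c}) x b"
      using center_neighbor[OF S] xS by blast
    have "u \<notin> component_in E (S - {c}) x"
    proof
      assume "u \<in> component_in E (S - {c}) x"
      then have "connected_in E (S - {c}) a x"
        using u(2) unfolding component_in_def by (blast intro: connected_in_trans connected_in_sym)
      then show False
        using xa unfolding component_in_def by simp
    qed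
    then have "component_in E (S - {c}) x \<subseteq> S - {u}"
      using component_in_subset by blast
    then have xb: "connected_in E (S - {u}) x b"
      using connected_in_component[OF b(2)] by (rule connected_in_mono[rotated])
    then have "b \<in> S - {u}"
      using connected_in_mem by blast
    moreover have "c \<in> S - {u}"
      using S(2) connected_in_mem[OF u(2)] by blast
    ultimately have "connected_in E (S - {u}) b c"
      using b(1) by (intro connected_in_edge)
    then have "connected_in E (S - {u}) x c"
      using xb by (rule connected_in_trans[rotated])
    then have "c \<in> component_in E (S - {u}) w"
      using x unfolding component_in_def by (blast intro: connected_in_trans)
    then show False
      using w by simp
  qed
  then show "x \<in> component_in E (S - {c}) a - {u}"
    using xS by simp
qed

lemma tree_components_shrink:
  assumes t: "is_tree L E" and S: "finite S" "\<forall>a\<in>S. \<forall>b\<in>S. connected_in E S a b" "c \<in> S"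
    and big: "card S < 2 * card (component_in E (S - {c}) a)"
    and u: "{u, c} \<in> E" "connected_in E (S - {c}) a u" and w: "w \<in> S - {u}"
  shows "card (component_in E (S - {u}) w) < card (component_in E (S - {c}) a)"
proof -
  define T where "T = component_in E (S - {c}) a"
  have TS: "T \<subseteq> S - {c}"
    unfolding T_def by (rule component_in_subset)
  then have fT: "finite T"
    using S(1) by (auto intro: finite_subset)
  have uT: "u \<in> T"
    using u(2) unfolding T_def component_in_def by simp
  show ?thesis
  proof (cases "c \<in> component_in E (S - {u}) w")
    case True
    then have "component_in E (S - {u}) w \<subseteq> S - T"
      using tree_component_through_center_disjoint[OF t S(3) u] component_in_subset unfolding T_def
      by blast
    then have "card (component_in E (S - {u}) w) \<le> card S - card T"
      using S(1) TS fT by (metis card_Diff_subset card_mono finite_Diff Diff_subset order_trans)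
    then show ?thesis
      using big unfolding T_def by linarith
  next
    case False
    then have "component_in E (S - {u}) w \<subseteq> T - {u}"
      using component_avoiding_center_subset[OF S(2,3) u] unfolding T_def by blast
    then have "card (component_in E (S - {u}) w) \<le> card T - 1"
      using fT uT by (metis card_Diff_singleton card_mono finite_Diff)
    moreover have "card T > 0"
      using fT uT card_gt_0_iff by blast
    ultimately show ?thesis
      unfolding T_def by linarith
  qed
qed

text \<open>A vertex minimising the size of its largest component is a centroid: moving from c to
  its neighbor in an oversized component would shrink all components (tree_components_shrink).\<close>
lemma tree_centroid_exists:
  assumes t: "is_tree L E" and S: "finite S" "S \<noteq> {}" "\<forall>a\<in>S. \<forall>b\<in>S. connected_in E S a b"
  shows "\<exists>c\<in>S. \<forall>a\<in>S - {c}. 2 * card (component_in E (S - {c}) a) \<le> card S"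
proof -
  define \<mu> where "\<mu> c = Max (insert 0 ((\<lambda>a. card (component_in E (S - {c}) a)) ` (S - {c})))" for c
  have "Min (\<mu> ` S) \<in> \<mu> ` S"
    using S(1,2) by (intro Min_in) auto
  then obtain c where c: "c \<in> S" "\<mu> c = Min (\<mu> ` S)"
    by auto
  show ?thesis
  proof (rule bexI[OF _ c(1)], rule ballI, rule ccontr)
    fix a assume a: "a \<in> S - {c}"
    define T where "T = component_in E (S - {c}) a"
    assume "\<not> 2 * card T \<le> card S"
    then have big: "card S < 2 * card T"
      by simp
    obtain u where u: "{u, c} \<in> E" "connected_in E (S - {c}) a u"
      using center_neighbor[OF S(3) c(1) a] by blast
    then have "u \<in> T"
      unfolding T_def component_in_def by simp
    moreover have "T \<subseteq> S"
      unfolding T_def using component_in_subset by blast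
    ultimately have "u \<in> S" "0 < card T"
      using S(1) by (auto simp: card_gt_0_iff intro: finite_subset)
    have "\<mu> u < card T"
      unfolding \<mu>_def using S(1) \<open>0 < card T\<close>
        tree_components_shrink[OF t S(1,3) c(1) big[unfolded T_def] u] unfolding T_def
      by (subst Max_less_iff) auto
    moreover have "card T \<le> \<mu> c"
      unfolding \<mu>_def T_def using a S(1) by (intro Max_ge) auto
    moreover have "\<mu> c \<le> \<mu> u"
      using c(2) S(1) \<open>u \<in> S\<close> by simp
    ultimately show False
      by simp
  qed
qed

lemma tree_centroid_component:
  assumes t: "is_tree L E" and S: "finite S" "\<forall>a\<in>S. \<forall>b\<in>S. connected_in E S a b" "c \<in> S"
    and a: "a \<in> S - {c}" and T: "T = component_in E (S - {c}) a"
  shows "T \<subset> S" "T \<noteq> {}" "\<forall>x\<in>T. \<forall>y\<in>T. connected_in E T x y"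
    and "\<forall>i\<in>T. tree_dist E i c \<le> card T \<and> tree_dist E c i \<le> card T"
    and "\<forall>i\<in>T. \<forall>j\<in>S - T. tree_dist E i j = tree_dist E i c + tree_dist E c j"
proof -
  have TS: "T \<subseteq> S - {c}"
    unfolding T by (rule component_in_subset)
  have T_of: "component_in E (S - {c}) i = T" if "i \<in> T" for i
    using that component_in_eq unfolding T component_in_def by blast
  show "T \<subset> S"
    using TS S(3) by blast
  show "T \<noteq> {}"
    using component_in_self[OF a] unfolding T by blast
  show "\<forall>x\<in>T. \<forall>y\<in>T. connected_in E T x y"
    unfolding T using component_in_connected by blast
  show "\<forall>i\<in>T. tree_dist E i c \<le> card T \<and> tree_dist E c i \<le> card T"
  proof
    fix i assume i: "i \<in> T"
    then have "i \<in> S - {c}"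
      using TS by blast
    then show "tree_dist E i c \<le> card T \<and> tree_dist E c i \<le> card T"
      using tree_dist_center_le_card_component[OF S \<open>i \<in> S - {c}\<close>] unfolding T_of[OF i] by simp
  qed
  show "\<forall>i\<in>T. \<forall>j\<in>S - T. tree_dist E i j = tree_dist E i c + tree_dist E c j"
  proof (intro ballI)
    fix i j assume i: "i \<in> T" and j: "j \<in> S - T"
    have "i \<in> S - {c}"
      using i TS by blast
    moreover have "j \<in> S" "j \<notin> component_in E (S - {c}) i"
      using j T_of[OF i] by auto
    ultimately show "tree_dist E i j = tree_dist E i c + tree_dist E c j"
      by (rule tree_dist_through_center[OF t S(2,3)])
  qed
qed

lemma tree_centroid_decomposable:
  assumes t: "is_tree L E"
  shows "finite S \<Longrightarrow> S \<noteq> {} \<Longrightarrow> \<forall>a\<in>S. \<forall>b\<in>S. connected_in E S a b \<Longrightarrow>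
    centroid_decomposable (tree_dist E) S"
proof (induction "card S" arbitrary: S rule: less_induct)
  case less
  note S = less.prems
  obtain c where c: "c \<in> S" and centroid: "\<forall>a\<in>S - {c}. 2 * card (component_in E (S - {c}) a) \<le> card S"
    using tree_centroid_exists[OF t S] by blast
  define P where "P = component_in E (S - {c}) ` (S - {c})"
  show ?case
  proof (rule centroid_decomposableI[where c = c and P = P])
    show "S - {c} = \<Union>P"
      unfolding P_def by (rule Union_components[symmetric])
    show "(\<Sum>T\<in>P. card T) \<le> card S"
      unfolding P_def using S(1) by (simp add: sum_card_components card_Diff1_le)
    show "\<forall>j\<in>S. tree_dist E c j \<le> card S"
      using S(3) c by (auto intro: less_imp_le[OF tree_dist_less_card[OF _ S(1)]])
    show "\<forall>T\<in>P. centroid_decomposable (tree_dist E) T \<and> 2 * card T \<le> card S \<and>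
        (\<forall>i\<in>T. tree_dist E i c \<le> card T \<and> tree_dist E c i \<le> card T) \<and>
        (\<forall>i\<in>T. \<forall>j\<in>S - T. tree_dist E i j = tree_dist E i c + tree_dist E c j)"
    proof
      fix T assume "T \<in> P"
      then obtain a where a: "a \<in> S - {c}" and T: "T = component_in E (S - {c}) a"
        unfolding P_def by blast
      note part = tree_centroid_component[OF t S(1,3) c a T]
      have "card T < card S"
        using part(1) by (rule psubset_card_mono[OF S(1)])
      moreover have "finite T"
        using part(1) S(1) by (auto intro: finite_subset)
      ultimately have "centroid_decomposable (tree_dist E) T"
        using part(2,3) by (rule less.hyps)
      moreover have "2 * card T \<le> card S"
        using bspec[OF centroid a] unfolding T .
      ultimately show "centroid_decomposable (tree_dist E) T \<and> 2 * card T \<le> card S \<and>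
          (\<forall>i\<in>T. tree_dist E i c \<le> card T \<and> tree_dist E c i \<le> card T) \<and>
          (\<forall>i\<in>T. \<forall>j\<in>S - T. tree_dist E i j = tree_dist E i c + tree_dist E c j)"
        using part(4,5) by (intro conjI)
    qed
  qed (rule S(1), rule c)
qed

lemma ceillog2_squared_le:
  assumes "L \<ge> 2"
  shows "real ((ceillog2 L + 1)\<^sup>2) \<le> 9 * (log 2 (real L))\<^sup>2"
proof -
  have "1 \<le> log 2 (real L)"
    using assms by simp
  moreover have "real (ceillog2 L) < log 2 (real L) + 1"
    using assms by (intro ceillog2_less_log) simp
  ultimately have "real (ceillog2 L + 1) \<le> 3 * log 2 (real L)"
    by simp
  then have "real (ceillog2 L + 1) ^ 2 \<le> (3 * log 2 (real L)) ^ 2"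
    by (intro power_mono) simp_all
  then show ?thesis
    by (simp add: power_mult_distrib)
qed

lemma tree_mask_program:
  assumes t: "is_tree L E" and "L \<ge> 1"
  obtains p out where "length p \<le> 1210 * L * (ceillog2 L + 1)\<^sup>2"
    "\<forall>i<L. \<forall>f x. prog_val p f x (out i) = (\<Sum>j<L. f (tree_dist E i j) * x j)"
proof -
  have "centroid_decomposable (tree_dist E) {..<L}"
    using assms tree_connected[OF t] by (intro tree_centroid_decomposable[OF t]) (auto simp: lessThan_empty_iff)
  then have "computable_from {} (1210 * L * (ceillog2 L + 1)\<^sup>2) (mask_row (tree_dist E) {..<L} ` {..<L})"
    using computable_mask_rows[of "tree_dist E" "{..<L}" "ceillog2 L"] by (simp add: le_two_power_ceillog2)
  then obtain p where p: "length p \<le> 1210 * L * (ceillog2 L + 1)\<^sup>2"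
    and rows: "\<forall>v\<in>mask_row (tree_dist E) {..<L} ` {..<L}. computes p v"
    by (rule computable_from_emptyE)
  have "\<forall>i<L. \<exists>r. \<forall>f x. prog_val p f x r = (\<Sum>j<L. f (tree_dist E i j) * x j)"
    using rows unfolding computes_def mask_row_def by fastforce
  then obtain out where "\<forall>i<L. \<forall>f x. prog_val p f x (out i) = (\<Sum>j<L. f (tree_dist E i j) * x j)"
    by metis
  with p show ?thesis
    by (rule that)
qed

theorem lemma6p1:
  shows "\<exists>C>0. \<forall>L\<ge>2. \<forall>E. is_tree L E \<longrightarrow>
    (\<exists>p out. real (length p) \<le> C * real L * (log 2 (real L))^2 \<and> length out = L \<and>
       (\<forall>(f::nat \<Rightarrow> real) (x::nat \<Rightarrow> real). \<forall>i<L.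
          prog_val p f x (out ! i) = (\<Sum>j<L. f (tree_dist E i j) * x j)))"
proof (intro exI[of _ "9 * 1210"] conjI allI impI)
  fix L E assume L: "2 \<le> L" and t: "is_tree L E"
  obtain p out where p: "length p \<le> 1210 * L * (ceillog2 L + 1)\<^sup>2"
    and out: "\<forall>i<L. \<forall>f x. prog_val p f x (out i) = (\<Sum>j<L. f (tree_dist E i j) * x j)"
    using tree_mask_program[OF t] L by auto
  have "real (length p) \<le> 1210 * real L * real ((ceillog2 L + 1)\<^sup>2)"
    using p by (metis of_nat_le_iff of_nat_mult of_nat_numeral)
  also have "\<dots> \<le> 1210 * real L * (9 * (log 2 (real L))\<^sup>2)"
    using ceillog2_squared_le[OF L] by (intro mult_left_mono) auto
  finally show "\<exists>p out. real (length p) \<le> 9 * 1210 * real L * (log 2 (real L))\<^sup>2 \<and> length out = L \<and>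
      (\<forall>(f::nat \<Rightarrow> real) (x::nat \<Rightarrow> real). \<forall>i<L.
         prog_val p f x (out ! i) = (\<Sum>j<L. f (tree_dist E i j) * x j))"
    using out by (intro exI[of _ p] exI[of _ "map out [0..<L]"]) simp
qed simp

end
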